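(* Let $n\ge 2$ and let $\sigma,\delta,\tau\in\mathbb{C}$ with $\sigma\tau\neq 0$. Let $T=(n;\sigma,\delta,\tau)$ and let $\lambda_h=\delta+2\sqrt{\sigma\tau}\cos\frac{h\pi}{n+1}$, $h=1,\dots,n$, be its eigenvalues. Then \[ \min_{\lambda_j\neq\lambda_h}|\lambda_h-\lambda_j|= \begin{cases} 4\sqrt{|\sigma\tau|}\,\sin\frac{\pi}{2(n+1)}\sin\frac{(2h-1)\pi}{2(n+1)}, & \text{for } 1<h\le \frac n2 \text{ or } h=n,\\[1mm] 4\sqrt{|\sigma\tau|}\,\sin\frac{\pi}{2(n+1)}\sin\frac{(2h+1)\pi}{2(n+1)}, & \text{for } h=1 \text{ or } \frac n2<h<n. \end{cases} \] In particular, the distance of $\lambda_h$ to the other eigenvalues of $T$ depends only on $h$, $n$ and $|\sigma\tau|$. Moreover, the minimal distance between any two distinct eigenvalues of $T$ equals $4\sqrt{|\sigma\tau|}\sin\frac{\pi}{2(n+1)}\sin\frac{3\pi}{2(n+1)}$, and it is achieved by $|\lambda_1-\lambda_2|$ and by $|\lambda_{n-1}-\lambda_n|$.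
   Context: For $\sigma,\delta,\tau\in\mathbb{C}$, $T=(n;\sigma,\delta,\tau)$ denotes the $n\times n$ tridiagonal Toeplitz matrix with all diagonal entries equal to $\delta$, all superdiagonal entries equal to $\tau$ and all subdiagonal entries equal to $\sigma$. For $\sigma\tau\ne0$ its eigenvalues are $\lambda_h=\delta+2\sqrt{\sigma\tau}\cos\frac{h\pi}{n+1}$, $h=1,\dots,n$, for a fixed choice of the square root; they are simple. *)

theory Defs
  imports Complex_Main
begin

text \<open>Eigenvalue lambda_h of T = (n; sigma, delta, tau), given a fixed square root s of sigma*tau.\<close>
definition tt_eig :: "nat \<Rightarrow> complex \<Rightarrow> complex \<Rightarrow> nat \<Rightarrow> complex" where
  "tt_eig n \<delta> s h = \<delta> + 2 * s * complex_of_real (cos (real h * pi / (real n + 1)))"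

end

theory Submission
  imports Defs
begin

text \<open>Up to the translation by \<open>\<delta>\<close> and the rotation by \<open>s / \<bar>s\<bar>\<close>, the eigenvalues are the
  real numbers \<open>\<nu> h = 2 \<bar>s\<bar> cos (h \<pi> / (n + 1))\<close>, which strictly decrease in \<open>h\<close>; so the
  nearest neighbours of \<open>\<lambda> h\<close> are among \<open>\<lambda> (h - 1)\<close> and \<open>\<lambda> (h + 1)\<close>. The gap
  \<open>\<nu> (h - 1) - \<nu> h\<close> equals \<open>4 \<bar>s\<bar> sin (\<pi> / (2 (n + 1))) sin ((2 h - 1) \<pi> / (2 (n + 1)))\<close>, and its
  second difference is \<open>-2 (1 - cos (\<pi> / (n + 1))) \<nu> h\<close>: the gaps grow while \<open>\<nu> h \<ge> 0\<close>, that is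
  \<open>2 h \<le> n + 1\<close>, and shrink afterwards, which decides between the two neighbours. By the sine
  formula the smallest gap is the first one, and it equals the last one by the symmetry
  \<open>\<nu> (n + 1 - h) = - \<nu> h\<close>.\<close>

lemma dist_ge_left_gap:
  fixes x :: "nat \<Rightarrow> real"
  assumes "strict_antimono_on {1..n} x" "1 \<le> j" "j < h" "h \<le> n"
  shows "x (h - 1) - x h \<le> \<bar>x h - x j\<bar>"
proof -
  have "x (h - 1) \<le> x j"
    using monotone_onD[OF assms(1), of j "h - 1"] assms by (cases "j = h - 1") (auto simp: less_imp_le)
  moreover have "x h < x j"
    using monotone_onD[OF assms(1), of j h] assms by auto
  ultimately show ?thesis by linarith
qed

lemma dist_ge_right_gap:
  fixes x :: "nat \<Rightarrow> real"
  assumes "strict_antimono_on {1..n} x" "1 \<le> h" "h < j" "j \<le> n"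
  shows "x h - x (h + 1) \<le> \<bar>x h - x j\<bar>"
proof -
  have "x j \<le> x (h + 1)"
    using monotone_onD[OF assms(1), of "h + 1" j] assms by (cases "j = h + 1") auto
  moreover have "x j < x h"
    using monotone_onD[OF assms(1), of h j] assms by auto
  ultimately show ?thesis by linarith
qed

lemma Min_dist_strict_antimono:
  fixes x :: "nat \<Rightarrow> real"
  assumes x: "strict_antimono_on {1..n} x" and "2 \<le> n" and h: "h \<in> {1..n}"
  shows "Min {\<bar>x h - x j\<bar> | j. j \<in> {1..n} \<and> x j \<noteq> x h} =
    (if h = 1 then x h - x (h + 1)
     else if h = n then x (h - 1) - x h
     else min (x (h - 1) - x h) (x h - x (h + 1)))" (is "Min ?S = ?d")
proof (rule Min_eqI)
  show "finite ?S"
    by (rule finite_subset[of _ "(\<lambda>j. \<bar>x h - x j\<bar>) ` {1..n}"]) auto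
  have lt_left: "x h < x (h - 1)" if "1 < h"
    using h that by (intro monotone_onD[OF x]) auto
  have lt_right: "x (h + 1) < x h" if "h < n"
    using h that by (intro monotone_onD[OF x]) auto
  have left: "x (h - 1) - x h \<in> ?S" if "1 < h"
    using lt_left[OF that] h that by (auto intro!: exI[of _ "h - 1"])
  have right: "x h - x (h + 1) \<in> ?S" if "h < n"
    using lt_right[OF that] h that by (auto intro!: exI[of _ "h + 1"])
  show "?d \<in> ?S"
    using left right lt_left lt_right h \<open>2 \<le> n\<close> by (auto simp: min_def)
next
  fix y assume "y \<in> ?S"
  then obtain j where y: "y = \<bar>x h - x j\<bar>" and j: "j \<in> {1..n}" "j \<noteq> h"
    by auto
  show "?d \<le> y"
    using dist_ge_left_gap[OF x, of j h] dist_ge_right_gap[OF x, of h j] y j h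
    by (cases "j < h") (auto simp: min_le_iff_disj)
qed

lemma Min_pair_dist_strict_antimono:
  fixes x :: "nat \<Rightarrow> real"
  assumes x: "strict_antimono_on {1..n} x" and k: "k \<in> {2..n}"
    and min_gap: "\<And>h. h \<in> {2..n} \<Longrightarrow> x (k - 1) - x k \<le> x (h - 1) - x h"
  shows "Min {\<bar>x h - x j\<bar> | h j. h \<in> {1..n} \<and> j \<in> {1..n} \<and> x j \<noteq> x h} = x (k - 1) - x k"
    (is "Min ?S = _")
proof (rule Min_eqI)
  show "finite ?S"
    by (rule finite_subset[of _ "(\<lambda>(h, j). \<bar>x h - x j\<bar>) ` ({1..n} \<times> {1..n})"]) auto
  have "x k < x (k - 1)"
    using k by (intro monotone_onD[OF x]) auto
  then show "x (k - 1) - x k \<in> ?S"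
    unfolding mem_Collect_eq using k by (intro exI[of _ k] exI[of _ "k - 1"]) auto
next
  have bound: "x (k - 1) - x k \<le> \<bar>x h - x j\<bar>" if "j < h" "j \<in> {1..n}" "h \<in> {1..n}" for h j
    using min_gap[of h] dist_ge_left_gap[OF x, of j h] that by auto
  fix y assume "y \<in> ?S"
  then obtain h j where "y = \<bar>x h - x j\<bar>" "h \<in> {1..n}" "j \<in> {1..n}" "j \<noteq> h"
    by auto
  then show "x (k - 1) - x k \<le> y"
    using bound[of j h] bound[of h j] by (cases "j < h") (auto simp: abs_minus_commute)
qed

lemma sin_le_sin_reflected:
  assumes "0 \<le> a" "a \<le> x" "x \<le> pi - a"
  shows "sin a \<le> sin x"
proof (cases "x \<le> pi / 2")
  case True
  then show ?thesis
    using assms by (intro sin_monotone_2pi_le) auto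
next
  case False
  then have "sin a \<le> sin (pi - x)"
    using assms by (intro sin_monotone_2pi_le) auto
  then show ?thesis
    by simp
qed

definition tt_coord :: "real \<Rightarrow> nat \<Rightarrow> nat \<Rightarrow> real" where
  "tt_coord r n h = 2 * r * cos (real h * pi / (real n + 1))"

lemma norm_tt_eig_diff:
  "cmod (tt_eig n \<delta> s h - tt_eig n \<delta> s j) = \<bar>tt_coord (cmod s) n h - tt_coord (cmod s) n j\<bar>"
proof -
  define d where "d = 2 * (cos (real h * pi / (real n + 1)) - cos (real j * pi / (real n + 1)))"
  have "tt_eig n \<delta> s h - tt_eig n \<delta> s j = s * complex_of_real d"
    unfolding tt_eig_def d_def by (simp add: algebra_simps)
  moreover have "tt_coord (cmod s) n h - tt_coord (cmod s) n j = cmod s * d"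
    unfolding tt_coord_def d_def by (simp add: algebra_simps)
  ultimately show ?thesis
    by (simp add: norm_mult abs_mult)
qed

lemma tt_eig_eq_iff:
  "tt_eig n \<delta> s j = tt_eig n \<delta> s h \<longleftrightarrow> tt_coord (cmod s) n j = tt_coord (cmod s) n h"
  using norm_tt_eig_diff[of n \<delta> s h j] by auto

lemma strict_antimono_on_tt_coord:
  assumes "0 < r"
  shows "strict_antimono_on {0..n + 1} (tt_coord r n)"
proof (rule monotone_onI)
  fix i j assume ij: "i \<in> {0..n + 1}" "j \<in> {0..n + 1}" "i < j"
  have "cos (real j * pi / (real n + 1)) < cos (real i * pi / (real n + 1))"
  proof (rule cos_monotone_0_pi)
    show "real i * pi / (real n + 1) < real j * pi / (real n + 1)"
      using ij by (simp add: divide_strict_right_mono)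
    have "real j * pi \<le> (real n + 1) * pi"
      using ij by (intro mult_right_mono) auto
    then show "real j * pi / (real n + 1) \<le> pi"
      by (simp add: divide_le_eq)
  qed simp
  then show "tt_coord r n j < tt_coord r n i"
    unfolding tt_coord_def using assms by simp
qed

lemma tt_coord_reflect:
  assumes "h \<le> n + 1"
  shows "tt_coord r n (n + 1 - h) = - tt_coord r n h"
proof -
  have "real (n + 1 - h) * pi / (real n + 1) = pi - real h * pi / (real n + 1)"
    using assms by (simp add: of_nat_diff field_simps)
  then show ?thesis
    unfolding tt_coord_def by simp
qed

lemma tt_coord_nonneg:
  assumes "0 \<le> r" "2 * h \<le> n + 1"
  shows "0 \<le> tt_coord r n h"
proof -
  have "2 * real h \<le> real n + 1"
    using assms(2) by linarith
  then have "2 * real h * pi \<le> (real n + 1) * pi"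
    by (rule mult_right_mono) simp
  then have "real h * pi / (real n + 1) \<le> pi / 2"
    by (simp add: field_simps)
  moreover have "0 \<le> real h * pi / (real n + 1)"
    by simp
  ultimately have "0 \<le> cos (real h * pi / (real n + 1))"
    using pi_gt_zero by (intro cos_ge_zero) linarith+
  then show ?thesis
    unfolding tt_coord_def using assms(1) by simp
qed

lemma tt_coord_nonpos:
  assumes "0 \<le> r" "n + 1 \<le> 2 * h" "h \<le> n + 1"
  shows "tt_coord r n h \<le> 0"
  using tt_coord_nonneg[OF assms(1), of "n + 1 - h" n] tt_coord_reflect[OF assms(3), of r] assms(2)
  by simp

lemma tt_coord_gap:
  "tt_coord r n h - tt_coord r n (h + 1)
     = 4 * r * sin (pi / (2 * (real n + 1))) * sin ((2 * real h + 1) * pi / (2 * (real n + 1)))"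
proof -
  define u where "u = pi / (2 * (real n + 1))"
  have "2 * u = pi / (real n + 1)"
    unfolding u_def by (simp add: field_simps)
  then have angle: "real k * pi / (real n + 1) = 2 * real k * u" for k
    by (metis mult.assoc mult.commute times_divide_eq_right)
  have half_sum: "(2 * real h * u + 2 * real (h + 1) * u) / 2 = (2 * real h + 1) * u"
    and half_diff: "(2 * real (h + 1) * u - 2 * real h * u) / 2 = u"
    by (simp_all add: algebra_simps)
  have "(2 * real h + 1) * pi / (2 * (real n + 1)) = (2 * real h + 1) * u"
    unfolding u_def by simp
  then show ?thesis
    unfolding tt_coord_def angle right_diff_distrib[symmetric] cos_diff_cos half_sum half_diff
      u_def[symmetric]
    by simp
qed

lemma tt_coord_gap_left:
  assumes "1 \<le> h"
  shows "tt_coord r n (h - 1) - tt_coord r n h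
     = 4 * r * sin (pi / (2 * (real n + 1))) * sin ((2 * real h - 1) * pi / (2 * (real n + 1)))"
  using tt_coord_gap[of r n "h - 1"] assms by (simp add: of_nat_diff algebra_simps)

lemma tt_coord_second_difference:
  assumes "1 \<le> h"
  shows "(tt_coord r n (h - 1) - tt_coord r n h) - (tt_coord r n h - tt_coord r n (h + 1))
     = - 2 * (1 - cos (pi / (real n + 1))) * tt_coord r n h"
proof -
  define t where "t = pi / (real n + 1)"
  have angle: "real k * pi / (real n + 1) = real k * t" for k
    unfolding t_def by simp
  have shift: "real (h - 1) * t = real h * t - t" "real (h + 1) * t = real h * t + t"
    using assms by (simp_all add: of_nat_diff algebra_simps)
  show ?thesis
    unfolding tt_coord_def angle t_def[symmetric] shift
    by (simp only: cos_add cos_diff) (simp add: algebra_simps)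
qed

lemma tt_coord_gap_le_next:
  assumes "0 \<le> r" "1 \<le> h" "2 * h \<le> n + 1"
  shows "tt_coord r n (h - 1) - tt_coord r n h \<le> tt_coord r n h - tt_coord r n (h + 1)"
proof -
  have "0 \<le> (1 - cos (pi / (real n + 1))) * tt_coord r n h"
    using tt_coord_nonneg[OF assms(1,3)] by simp
  then show ?thesis
    using tt_coord_second_difference[OF assms(2), of r n] by linarith
qed

lemma tt_coord_gap_ge_next:
  assumes "0 \<le> r" "n + 1 \<le> 2 * h" "h \<le> n + 1"
  shows "tt_coord r n h - tt_coord r n (h + 1) \<le> tt_coord r n (h - 1) - tt_coord r n h"
proof -
  have "(1 - cos (pi / (real n + 1))) * tt_coord r n h \<le> 0"
    using tt_coord_nonpos[OF assms] by (simp add: mult_nonneg_nonpos)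
  moreover have "1 \<le> h"
    using assms(2) by linarith
  ultimately show ?thesis
    using tt_coord_second_difference[of h r n] by linarith
qed

lemma tt_coord_min_gap:
  assumes "0 \<le> r" "h \<in> {2..n}"
  shows "tt_coord r n 1 - tt_coord r n 2 \<le> tt_coord r n (h - 1) - tt_coord r n h"
proof -
  define u where "u = pi / (2 * (real n + 1))"
  have u: "0 < u"
    unfolding u_def by simp
  have "3 * u \<le> (2 * real h - 1) * u"
    using assms(2) u by (intro mult_right_mono) auto
  moreover have "(2 * real h - 1) * u \<le> (2 * real n - 1) * u"
    using assms(2) u by (intro mult_right_mono) auto
  moreover have "(2 * real n - 1) * u = pi - 3 * u"
    unfolding u_def by (simp add: field_simps)
  ultimately have "sin (3 * u) \<le> sin ((2 * real h - 1) * u)"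
    using u by (intro sin_le_sin_reflected) auto
  moreover have "0 \<le> sin u"
    unfolding u_def by (intro sin_ge_zero) (auto simp: field_simps)
  ultimately have "4 * r * sin u * sin (3 * u) \<le> 4 * r * sin u * sin ((2 * real h - 1) * u)"
    using assms(1) by (simp add: mult_left_mono)
  moreover have "tt_coord r n 1 - tt_coord r n 2 = 4 * r * sin u * sin (3 * u)"
    using tt_coord_gap_left[of 2 r n] by (simp add: u_def)
  moreover have "tt_coord r n (h - 1) - tt_coord r n h = 4 * r * sin u * sin ((2 * real h - 1) * u)"
    using tt_coord_gap_left[of h r n] assms(2) by (simp add: u_def)
  ultimately show ?thesis
    by simp
qed

lemma tt_coord_last_gap:
  assumes "2 \<le> n"
  shows "tt_coord r n (n - 1) - tt_coord r n n = tt_coord r n 1 - tt_coord r n 2"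
  using tt_coord_reflect[of 2 n r] tt_coord_reflect[of 1 n r] assms by (simp add: numeral_2_eq_2)

lemma strict_antimono_on_tt_coord_interior:
  assumes "0 < r"
  shows "strict_antimono_on {1..n} (tt_coord r n)"
  using strict_antimono_on_tt_coord[OF assms] by (rule monotone_on_subset) auto

lemma Min_dist_tt_coord:
  assumes "0 < r" "2 \<le> n" "h \<in> {1..n}"
  shows "Min {\<bar>tt_coord r n h - tt_coord r n j\<bar> | j. j \<in> {1..n} \<and> tt_coord r n j \<noteq> tt_coord r n h}
    = (if (1 < h \<and> 2 * h \<le> n) \<or> h = n then tt_coord r n (h - 1) - tt_coord r n h
       else tt_coord r n h - tt_coord r n (h + 1))"
  unfolding Min_dist_strict_antimono[OF strict_antimono_on_tt_coord_interior[OF assms(1)] assms(2,3)]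
  using tt_coord_gap_le_next[of r h n] tt_coord_gap_ge_next[of r n h] assms by (auto simp: min_def)

lemma Min_pair_dist_tt_coord:
  assumes "0 < r" "2 \<le> n"
  shows "Min {\<bar>tt_coord r n h - tt_coord r n j\<bar> | h j. h \<in> {1..n} \<and> j \<in> {1..n}
      \<and> tt_coord r n j \<noteq> tt_coord r n h} = tt_coord r n 1 - tt_coord r n 2"
  using Min_pair_dist_strict_antimono[OF strict_antimono_on_tt_coord_interior[OF assms(1)], of 2]
    tt_coord_min_gap[of r] assms by simp

theorem proposition1:
  fixes n :: nat and \<sigma> \<delta> \<tau> s :: complex
  assumes "n \<ge> 2" and "\<sigma> * \<tau> \<noteq> 0" and "s\<^sup>2 = \<sigma> * \<tau>"
  shows "(\<forall>h\<in>{1..n}.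
            Min {cmod (tt_eig n \<delta> s h - tt_eig n \<delta> s j) | j. j \<in> {1..n} \<and> tt_eig n \<delta> s j \<noteq> tt_eig n \<delta> s h}
          = (if (1 < h \<and> 2 * h \<le> n) \<or> h = n
             then 4 * sqrt (cmod (\<sigma> * \<tau>)) * sin (pi / (2 * (real n + 1)))
                    * sin ((2 * real h - 1) * pi / (2 * (real n + 1)))
             else 4 * sqrt (cmod (\<sigma> * \<tau>)) * sin (pi / (2 * (real n + 1)))
                    * sin ((2 * real h + 1) * pi / (2 * (real n + 1)))))
       \<and> Min {cmod (tt_eig n \<delta> s h - tt_eig n \<delta> s j) | h j. h \<in> {1..n} \<and> j \<in> {1..n}
                \<and> tt_eig n \<delta> s j \<noteq> tt_eig n \<delta> s h}
          = 4 * sqrt (cmod (\<sigma> * \<tau>)) * sin (pi / (2 * (real n + 1))) * sin (3 * pi / (2 * (real n + 1)))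
       \<and> cmod (tt_eig n \<delta> s 1 - tt_eig n \<delta> s 2)
          = 4 * sqrt (cmod (\<sigma> * \<tau>)) * sin (pi / (2 * (real n + 1))) * sin (3 * pi / (2 * (real n + 1)))
       \<and> cmod (tt_eig n \<delta> s (n - 1) - tt_eig n \<delta> s n)
          = 4 * sqrt (cmod (\<sigma> * \<tau>)) * sin (pi / (2 * (real n + 1))) * sin (3 * pi / (2 * (real n + 1)))"
proof -
  have sqrt_eq: "sqrt (cmod (\<sigma> * \<tau>)) = cmod s"
    by (simp add: norm_power flip: assms(3))
  have s: "0 < cmod s"
    using assms(2,3) by auto
  let ?\<nu> = "tt_coord (cmod s) n"
  have nearest: "Min {\<bar>?\<nu> h - ?\<nu> j\<bar> | j. j \<in> {1..n} \<and> ?\<nu> j \<noteq> ?\<nu> h}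
          = (if (1 < h \<and> 2 * h \<le> n) \<or> h = n
             then 4 * cmod s * sin (pi / (2 * (real n + 1))) * sin ((2 * real h - 1) * pi / (2 * (real n + 1)))
             else 4 * cmod s * sin (pi / (2 * (real n + 1))) * sin ((2 * real h + 1) * pi / (2 * (real n + 1))))"
    if "h \<in> {1..n}" for h
    unfolding Min_dist_tt_coord[OF s assms(1) that] tt_coord_gap
    using tt_coord_gap_left[of h "cmod s" n] that by simp
  have "?\<nu> 2 < ?\<nu> 1"
    using monotone_onD[OF strict_antimono_on_tt_coord[OF s, of n], of 1 2] assms(1) by simp
  then have "\<bar>?\<nu> 1 - ?\<nu> 2\<bar> = ?\<nu> 1 - ?\<nu> 2" "\<bar>?\<nu> (n - 1) - ?\<nu> n\<bar> = ?\<nu> 1 - ?\<nu> 2"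
    using tt_coord_last_gap[OF assms(1)] by auto
  moreover have "?\<nu> 1 - ?\<nu> 2 = 4 * cmod s * sin (pi / (2 * (real n + 1))) * sin (3 * pi / (2 * (real n + 1)))"
    using tt_coord_gap_left[of 2 "cmod s" n] by simp
  ultimately show ?thesis
    unfolding norm_tt_eig_diff tt_eig_eq_iff sqrt_eq
    using nearest Min_pair_dist_tt_coord[OF s assms(1)] by simp
qed

end
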